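(* Let $A$ and $B$ be rings, $f: A\to B$ a ring homomorphism and $J$ a proper ideal of $B$ such that $J\subseteq\mathrm{nil}(B)$. Then $A\bowtie^{f}J$ is a weak Armendariz ring if and only if $A$ is a weak Armendariz ring.
   Context: All rings are associative with identity (not necessarily commutative), ring homomorphisms are unital, and ideals are two-sided. $\mathrm{nil}(R)$ denotes the set of nilpotent elements of a ring $R$. For a ring homomorphism $f:A\to B$ and an ideal $J$ of $B$, the amalgamation is the subring $A\bowtie^{f}J=\{(a,f(a)+j)\mid a\in A,\ j\in J\}$ of $A\times B$. A ring $R$ is weak Armendariz if whenever $p(x)=\sum_{i=0}^n a_ix^i$ and $q(x)=\sum_{j=0}^m b_jx^j$ in $R[x]$ satisfy $p(x)q(x)=0$, then $a_ib_j\in\mathrm{nil}(R)$ for all $i,j$. *)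

theory Defs
  imports "HOL-Algebra.UnivPoly" "HOL-Algebra.Chinese_Remainder"
begin

definition nil_set :: "('a, 'm) ring_scheme \<Rightarrow> 'a set" where
  "nil_set R = {x \<in> carrier R. \<exists>n::nat. x [^]\<^bsub>R\<^esub> n = \<zero>\<^bsub>R\<^esub>}"

definition weak_armendariz :: "('a, 'm) ring_scheme \<Rightarrow> bool" where
  "weak_armendariz R \<longleftrightarrow>
     (\<forall>p \<in> carrier (UP R). \<forall>q \<in> carrier (UP R).
        p \<otimes>\<^bsub>UP R\<^esub> q = \<zero>\<^bsub>UP R\<^esub> \<longrightarrow>
        (\<forall>i j. coeff (UP R) p i \<otimes>\<^bsub>R\<^esub> coeff (UP R) q j \<in> nil_set R))"

definition amalg :: "('a, 'm) ring_scheme \<Rightarrow> ('b, 'n) ring_scheme \<Rightarrow> ('a \<Rightarrow> 'b) \<Rightarrow> 'b set \<Rightarrow> ('a \<times> 'b) ring" where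
  "amalg A B f J = (RDirProd A B)
     \<lparr>carrier := {(a, f a \<oplus>\<^bsub>B\<^esub> j) | a j. a \<in> carrier A \<and> j \<in> J}\<rparr>"

end

theory Submission
  imports Defs "HOL-Algebra.Subrings"
begin

text \<open>
  A ring homomorphism \<open>h : R \<rightarrow> S\<close> whose kernel is nil reflects nilpotency: if \<open>h x\<close> is
  nilpotent then \<open>x\<close> is. Mapping coefficients along \<open>h\<close> sends a zero product \<open>p q = 0\<close>
  in \<open>R[x]\<close> to a zero product in \<open>S[x]\<close>, so if \<open>S\<close> is weak Armendariz then so is \<open>R\<close>.
  Both directions of the theorem are instances: \<open>a \<mapsto> (a, f a)\<close> embeds \<open>A\<close> into
  \<open>A \<bowtie>\<^sup>f J\<close>, and the projection \<open>A \<bowtie>\<^sup>f J \<rightarrow> A\<close> has kernel \<open>0 \<times> J\<close>, which is nil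
  because \<open>J\<close> is.
\<close>

lemma nil_set_imp_pow_Suc_zero:
  assumes "ring R" and "x \<in> nil_set R"
  obtains m :: nat where "x [^]\<^bsub>R\<^esub> Suc m = \<zero>\<^bsub>R\<^esub>"
proof -
  interpret ring R by fact
  from assms(2) obtain m :: nat where "x \<in> carrier R" "x [^]\<^bsub>R\<^esub> m = \<zero>\<^bsub>R\<^esub>"
    unfolding nil_set_def by blast
  then have "x [^]\<^bsub>R\<^esub> Suc m = \<zero>\<^bsub>R\<^esub>" by simp
  then show thesis by (rule that)
qed

lemma nil_set_of_ring_hom_nil_kernel:
  assumes R: "ring R" and S: "ring S" and h: "h \<in> ring_hom R S"
    and ker: "a_kernel R S h \<subseteq> nil_set R"
    and x: "x \<in> carrier R" and hx: "h x \<in> nil_set S"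
  shows "x \<in> nil_set R"
proof -
  interpret H: ring_hom_ring R S h using ring_hom_ringI2[OF R S h] .
  from hx obtain n :: nat where "h x [^]\<^bsub>S\<^esub> n = \<zero>\<^bsub>S\<^esub>" unfolding nil_set_def by blast
  then have "h (x [^]\<^bsub>R\<^esub> n) = \<zero>\<^bsub>S\<^esub>" using H.hom_nat_pow[OF x] by simp
  then have "x [^]\<^bsub>R\<^esub> n \<in> a_kernel R S h" using x unfolding a_kernel_def' by simp
  with ker obtain m :: nat where "(x [^]\<^bsub>R\<^esub> n) [^]\<^bsub>R\<^esub> m = \<zero>\<^bsub>R\<^esub>"
    unfolding nil_set_def by blast
  then have "x [^]\<^bsub>R\<^esub> (n * m) = \<zero>\<^bsub>R\<^esub>" using H.R.nat_pow_pow[OF x] by simp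
  with x show ?thesis unfolding nil_set_def by blast
qed

definition up_map :: "('a \<Rightarrow> 'b) \<Rightarrow> (nat \<Rightarrow> 'a) \<Rightarrow> nat \<Rightarrow> 'b" where
  "up_map h p = (\<lambda>n. h (p n))"

lemma coeff_UP: "p \<in> carrier (UP R) \<Longrightarrow> coeff (UP R) p n = p n"
  by (simp add: UP_def)

lemma up_map_closed:
  assumes R: "ring R" and S: "ring S" and h: "h \<in> ring_hom R S"
    and p: "p \<in> carrier (UP R)"
  shows "up_map h p \<in> carrier (UP S)"
proof -
  interpret ring_hom_ring R S h using ring_hom_ringI2[OF R S h] .
  from p obtain m where "bound \<zero>\<^bsub>R\<^esub> m p" and pc: "\<And>n. p n \<in> carrier R"
    by (auto simp: UP_def up_def)
  then have "bound \<zero>\<^bsub>S\<^esub> m (up_map h p)" by (auto simp: up_map_def)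
  then show ?thesis using pc by (auto simp: UP_def up_def up_map_def)
qed

lemma coeff_up_map:
  assumes R: "ring R" and S: "ring S" and h: "h \<in> ring_hom R S"
    and p: "p \<in> carrier (UP R)"
  shows "coeff (UP S) (up_map h p) n = h (coeff (UP R) p n)"
proof -
  have "coeff (UP S) (up_map h p) n = up_map h p n"
    by (rule coeff_UP[OF up_map_closed[OF R S h p]])
  also have "\<dots> = h (coeff (UP R) p n)" by (simp add: up_map_def coeff_UP[OF p])
  finally show ?thesis .
qed

lemma up_map_zero:
  assumes "ring R" and "ring S" and "h \<in> ring_hom R S"
  shows "up_map h \<zero>\<^bsub>UP R\<^esub> = \<zero>\<^bsub>UP S\<^esub>"
proof -
  interpret ring_hom_ring R S h using ring_hom_ringI2 assms by blast
  show ?thesis by (simp add: up_map_def UP_def)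
qed

lemma up_map_mult:
  assumes R: "ring R" and S: "ring S" and h: "h \<in> ring_hom R S"
    and p: "p \<in> carrier (UP R)" and q: "q \<in> carrier (UP R)"
  shows "up_map h (p \<otimes>\<^bsub>UP R\<^esub> q) = up_map h p \<otimes>\<^bsub>UP S\<^esub> up_map h q"
proof -
  interpret H: ring_hom_ring R S h using ring_hom_ringI2[OF R S h] .
  interpret PR: UP_ring R "UP R" by unfold_locales simp
  interpret PS: UP_ring S "UP S" by unfold_locales simp
  have pq: "p \<otimes>\<^bsub>UP R\<^esub> q \<in> carrier (UP R)" using p q by simp
  have hp: "up_map h p \<in> carrier (UP S)" and hq: "up_map h q \<in> carrier (UP S)"
    and hpq: "up_map h (p \<otimes>\<^bsub>UP R\<^esub> q) \<in> carrier (UP S)"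
    using up_map_closed[OF R S h] p q pq by auto
  have pc: "\<And>n. p n \<in> carrier R" and qc: "\<And>n. q n \<in> carrier R"
    using p q by (auto simp: UP_def up_def)
  show ?thesis
  proof (rule PS.up_eqI)
    fix n
    have "coeff (UP S) (up_map h (p \<otimes>\<^bsub>UP R\<^esub> q)) n = h (coeff (UP R) (p \<otimes>\<^bsub>UP R\<^esub> q) n)"
      by (rule coeff_up_map[OF R S h pq])
    also have "\<dots> = h (\<Oplus>\<^bsub>R\<^esub>i \<in> {..n}. p i \<otimes>\<^bsub>R\<^esub> q (n - i))"
      by (simp only: PR.coeff_mult[OF p q] coeff_UP[OF p] coeff_UP[OF q])
    also have "\<dots> = (\<Oplus>\<^bsub>S\<^esub>i \<in> {..n}. h (p i) \<otimes>\<^bsub>S\<^esub> h (q (n - i)))"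
      using pc qc by (subst H.hom_finsum) (auto simp: comp_def)
    also have "\<dots> = coeff (UP S) (up_map h p \<otimes>\<^bsub>UP S\<^esub> up_map h q) n"
      by (simp only: PS.coeff_mult[OF hp hq] coeff_up_map[OF R S h p] coeff_up_map[OF R S h q]
          coeff_UP[OF p] coeff_UP[OF q])
    finally show "coeff (UP S) (up_map h (p \<otimes>\<^bsub>UP R\<^esub> q)) n
        = coeff (UP S) (up_map h p \<otimes>\<^bsub>UP S\<^esub> up_map h q) n" .
  qed (use hp hq hpq in auto)
qed

lemma weak_armendariz_ring_hom_nil_kernel:
  assumes R: "ring R" and S: "ring S" and h: "h \<in> ring_hom R S"
    and ker: "a_kernel R S h \<subseteq> nil_set R"
    and wa: "weak_armendariz S"
  shows "weak_armendariz R"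
  unfolding weak_armendariz_def
proof (intro ballI impI allI)
  interpret ring_hom_ring R S h using ring_hom_ringI2[OF R S h] .
  fix p q i j
  assume p: "p \<in> carrier (UP R)" and q: "q \<in> carrier (UP R)"
    and pq: "p \<otimes>\<^bsub>UP R\<^esub> q = \<zero>\<^bsub>UP R\<^esub>"
  have hp: "up_map h p \<in> carrier (UP S)" and hq: "up_map h q \<in> carrier (UP S)"
    using up_map_closed[OF R S h] p q by auto
  have "up_map h p \<otimes>\<^bsub>UP S\<^esub> up_map h q = \<zero>\<^bsub>UP S\<^esub>"
    using pq by (simp add: up_map_mult[OF R S h p q, symmetric] up_map_zero[OF R S h])
  with wa hp hq
  have "coeff (UP S) (up_map h p) i \<otimes>\<^bsub>S\<^esub> coeff (UP S) (up_map h q) j \<in> nil_set S"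
    unfolding weak_armendariz_def by blast
  moreover have pq_carrier: "p i \<in> carrier R" "q j \<in> carrier R"
    using p q by (auto simp: UP_def up_def)
  ultimately have "h (p i \<otimes>\<^bsub>R\<^esub> q j) \<in> nil_set S"
    by (simp add: coeff_up_map[OF R S h p] coeff_up_map[OF R S h q] coeff_UP[OF p] coeff_UP[OF q])
  then show "coeff (UP R) p i \<otimes>\<^bsub>R\<^esub> coeff (UP R) q j \<in> nil_set R"
    using nil_set_of_ring_hom_nil_kernel[OF R S h ker] pq_carrier
    by (simp add: coeff_UP[OF p] coeff_UP[OF q])
qed

lemma RDirProd_simps:
  "(x, y) \<otimes>\<^bsub>RDirProd R S\<^esub> (x', y') = (x \<otimes>\<^bsub>R\<^esub> x', y \<otimes>\<^bsub>S\<^esub> y')"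
  "(x, y) \<oplus>\<^bsub>RDirProd R S\<^esub> (x', y') = (x \<oplus>\<^bsub>R\<^esub> x', y \<oplus>\<^bsub>S\<^esub> y')"
  "\<one>\<^bsub>RDirProd R S\<^esub> = (\<one>\<^bsub>R\<^esub>, \<one>\<^bsub>S\<^esub>)"
  "\<zero>\<^bsub>RDirProd R S\<^esub> = (\<zero>\<^bsub>R\<^esub>, \<zero>\<^bsub>S\<^esub>)"
  by (simp_all add: RDirProd_def DirProd_def monoid.defs)

lemma amalg_simps:
  "carrier (amalg A B f J) = {(a, f a \<oplus>\<^bsub>B\<^esub> j) | a j. a \<in> carrier A \<and> j \<in> J}"
  "(x, y) \<otimes>\<^bsub>amalg A B f J\<^esub> (x', y') = (x \<otimes>\<^bsub>A\<^esub> x', y \<otimes>\<^bsub>B\<^esub> y')"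
  "(x, y) \<oplus>\<^bsub>amalg A B f J\<^esub> (x', y') = (x \<oplus>\<^bsub>A\<^esub> x', y \<oplus>\<^bsub>B\<^esub> y')"
  "\<one>\<^bsub>amalg A B f J\<^esub> = (\<one>\<^bsub>A\<^esub>, \<one>\<^bsub>B\<^esub>)"
  "\<zero>\<^bsub>amalg A B f J\<^esub> = (\<zero>\<^bsub>A\<^esub>, \<zero>\<^bsub>B\<^esub>)"
  by (simp_all add: amalg_def RDirProd_simps)

lemma RDirProd_a_inv:
  assumes "ring R" and "ring S" and "x \<in> carrier R" and "y \<in> carrier S"
  shows "\<ominus>\<^bsub>RDirProd R S\<^esub> (x, y) = (\<ominus>\<^bsub>R\<^esub> x, \<ominus>\<^bsub>S\<^esub> y)"
proof -
  interpret R: ring R by fact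
  interpret S: ring S by fact
  interpret P: ring "RDirProd R S" using RDirProd_ring assms by blast
  show ?thesis
    by (rule P.minus_equality)
      (use assms in \<open>simp_all add: RDirProd_simps RDirProd_carrier R.l_neg S.l_neg\<close>)
qed

lemma amalg_carrier_subset:
  assumes "ideal J B" and "f \<in> ring_hom A B"
  shows "carrier (amalg A B f J) \<subseteq> carrier A \<times> carrier B"
proof -
  interpret ideal J B by fact
  show ?thesis using assms(2) a_subset by (auto simp: amalg_simps ring_hom_def)
qed

lemma amalg_subring:
  assumes A: "ring A" and B: "ring B" and f: "f \<in> ring_hom A B" and J: "ideal J B"
  shows "subring (carrier (amalg A B f J)) (RDirProd A B)"
proof -
  interpret A: ring A by fact
  interpret B: ring B by fact
  interpret J: ideal J B by fact
  interpret H: ring_hom_ring A B f using ring_hom_ringI2[OF A B f] .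
  interpret P: ring "RDirProd A B" using RDirProd_ring[OF A B] .
  let ?C = "carrier (amalg A B f J)"
  have mem: "(a, f a \<oplus>\<^bsub>B\<^esub> j) \<in> ?C" if "a \<in> carrier A" "j \<in> J" for a j
    using that by (auto simp: amalg_simps(1))
  show ?thesis
  proof (rule P.subringI)
    show "?C \<subseteq> carrier (RDirProd A B)"
      using amalg_carrier_subset[OF J f] by (simp add: RDirProd_carrier)
    show "\<one>\<^bsub>RDirProd A B\<^esub> \<in> ?C"
      using mem[of "\<one>\<^bsub>A\<^esub>" "\<zero>\<^bsub>B\<^esub>"] by (simp add: RDirProd_simps)
  next
    fix h assume "h \<in> ?C"
    then obtain a j where h: "h = (a, f a \<oplus>\<^bsub>B\<^esub> j)" "a \<in> carrier A" "j \<in> J"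
      by (auto simp: amalg_simps(1))
    then have "\<ominus>\<^bsub>RDirProd A B\<^esub> h = (\<ominus>\<^bsub>A\<^esub> a, f (\<ominus>\<^bsub>A\<^esub> a) \<oplus>\<^bsub>B\<^esub> \<ominus>\<^bsub>B\<^esub> j)"
      using J.a_subset by (auto simp: RDirProd_a_inv[OF A B] B.minus_add H.hom_a_inv B.a_comm)
    then show "\<ominus>\<^bsub>RDirProd A B\<^esub> h \<in> ?C"
      using mem[OF A.a_inv_closed[OF h(2)] J.a_inv_closed[OF h(3)]] by (simp only:)
  next
    fix h1 h2 assume "h1 \<in> ?C" "h2 \<in> ?C"
    then obtain a j a' j' where h: "h1 = (a, f a \<oplus>\<^bsub>B\<^esub> j)" "a \<in> carrier A" "j \<in> J"
      "h2 = (a', f a' \<oplus>\<^bsub>B\<^esub> j')" "a' \<in> carrier A" "j' \<in> J"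
      by (auto simp: amalg_simps(1))
    have c: "j \<in> carrier B" "j' \<in> carrier B" "f a \<in> carrier B" "f a' \<in> carrier B"
      using h J.a_subset by auto
    have "h1 \<otimes>\<^bsub>RDirProd A B\<^esub> h2 = (a \<otimes>\<^bsub>A\<^esub> a', f (a \<otimes>\<^bsub>A\<^esub> a') \<oplus>\<^bsub>B\<^esub>
       ((f a \<otimes>\<^bsub>B\<^esub> j' \<oplus>\<^bsub>B\<^esub> j \<otimes>\<^bsub>B\<^esub> f a') \<oplus>\<^bsub>B\<^esub> j \<otimes>\<^bsub>B\<^esub> j'))"
      using h c by (simp add: RDirProd_simps B.l_distr B.r_distr B.a_ac)
    moreover have "(f a \<otimes>\<^bsub>B\<^esub> j' \<oplus>\<^bsub>B\<^esub> j \<otimes>\<^bsub>B\<^esub> f a') \<oplus>\<^bsub>B\<^esub> j \<otimes>\<^bsub>B\<^esub> j' \<in> J"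
      using h c by (intro J.a_closed J.I_l_closed J.I_r_closed) auto
    ultimately show "h1 \<otimes>\<^bsub>RDirProd A B\<^esub> h2 \<in> ?C"
      using mem[OF A.m_closed[OF h(2,5)]] by metis
    have "h1 \<oplus>\<^bsub>RDirProd A B\<^esub> h2 = (a \<oplus>\<^bsub>A\<^esub> a', f (a \<oplus>\<^bsub>A\<^esub> a') \<oplus>\<^bsub>B\<^esub> (j \<oplus>\<^bsub>B\<^esub> j'))"
      using h c by (simp add: RDirProd_simps B.a_ac)
    then show "h1 \<oplus>\<^bsub>RDirProd A B\<^esub> h2 \<in> ?C"
      using mem[OF A.a_closed[OF h(2,5)] J.a_closed[OF h(3,6)]] by (simp only:)
  qed
qed

lemma ring_amalg:
  assumes "ring A" and "ring B" and "f \<in> ring_hom A B" and "ideal J B"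
  shows "ring (amalg A B f J)"
proof -
  interpret ring "RDirProd A B" using RDirProd_ring assms by blast
  show ?thesis
    using subring_is_ring[OF amalg_subring[OF assms]] by (simp add: amalg_def)
qed

lemma amalg_fst_ring_hom:
  assumes "f \<in> ring_hom A B" and "ideal J B"
  shows "fst \<in> ring_hom (amalg A B f J) A"
  using amalg_carrier_subset[OF assms(2,1)]
  by (intro ring_hom_memI) (auto simp: amalg_simps(2-4))

lemma amalg_snd_ring_hom:
  assumes "f \<in> ring_hom A B" and "ideal J B"
  shows "snd \<in> ring_hom (amalg A B f J) B"
  using amalg_carrier_subset[OF assms(2,1)]
  by (intro ring_hom_memI) (auto simp: amalg_simps(2-4))

lemma amalg_diag_ring_hom:
  assumes "ring B" and "f \<in> ring_hom A B" and "ideal J B"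
  shows "(\<lambda>a. (a, f a)) \<in> ring_hom A (amalg A B f J)"
proof (rule ring_hom_memI)
  interpret B: ring B by fact
  interpret ideal J B by fact
  fix a assume a: "a \<in> carrier A"
  with assms(2) have "(a, f a) = (a, f a \<oplus>\<^bsub>B\<^esub> \<zero>\<^bsub>B\<^esub>)" by (simp add: ring_hom_closed)
  then show "(a, f a) \<in> carrier (amalg A B f J)" using a by (auto simp: amalg_simps(1))
qed (use assms(2) in \<open>simp_all add: amalg_simps(2-4) ring_hom_mult ring_hom_add ring_hom_one\<close>)

lemma a_kernel_amalg_diag:
  assumes "ring A"
  shows "a_kernel A (amalg A B f J) (\<lambda>a. (a, f a)) \<subseteq> nil_set A"
proof -
  interpret ring A by fact
  have "\<exists>n::nat. \<zero>\<^bsub>A\<^esub> [^]\<^bsub>A\<^esub> n = \<zero>\<^bsub>A\<^esub>" by (rule exI[of _ 1]) simp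
  then show ?thesis by (auto simp: a_kernel_def' amalg_simps(5) nil_set_def)
qed

lemma a_kernel_amalg_fst:
  assumes A: "ring A" and B: "ring B" and f: "f \<in> ring_hom A B" and J: "ideal J B"
    and J_nil: "J \<subseteq> nil_set B"
  shows "a_kernel (amalg A B f J) A fst \<subseteq> nil_set (amalg A B f J)"
proof
  let ?D = "amalg A B f J"
  interpret B: ring B by fact
  interpret ideal J B by fact
  interpret Fst: ring_hom_ring ?D A fst
    using ring_hom_ringI2[OF ring_amalg[OF A B f J] A amalg_fst_ring_hom[OF f J]] .
  interpret Snd: ring_hom_ring ?D B snd
    using ring_hom_ringI2[OF ring_amalg[OF A B f J] B amalg_snd_ring_hom[OF f J]] .
  fix x assume "x \<in> a_kernel ?D A fst"
  then have xc: "x \<in> carrier ?D" and x0: "fst x = \<zero>\<^bsub>A\<^esub>"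
    unfolding a_kernel_def' by auto
  from xc obtain a j where x: "x = (a, f a \<oplus>\<^bsub>B\<^esub> j)" and j: "j \<in> J"
    unfolding amalg_simps(1) by blast
  have "snd x = j"
    using x x0 a_subset j ring_hom_zero[OF f A B] B.l_zero by auto
  \<comment> \<open>A positive exponent is needed: \<open>x [^] 0\<close> is \<open>\<one>\<close>, not \<open>\<zero>\<close>.\<close>
  moreover obtain m :: nat where "j [^]\<^bsub>B\<^esub> Suc m = \<zero>\<^bsub>B\<^esub>"
    using nil_set_imp_pow_Suc_zero[OF B] J_nil j by blast
  ultimately have "snd (x [^]\<^bsub>?D\<^esub> Suc m) = \<zero>\<^bsub>B\<^esub>"
    using Snd.hom_nat_pow[OF xc] by metis
  moreover have "fst (x [^]\<^bsub>?D\<^esub> Suc m) = \<zero>\<^bsub>A\<^esub>"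
    using Fst.hom_nat_pow[OF xc] x0 Fst.S.nat_pow_zero by (metis nat.discI)
  ultimately have "x [^]\<^bsub>?D\<^esub> Suc m = \<zero>\<^bsub>?D\<^esub>"
    by (simp add: amalg_simps(5) prod_eq_iff)
  with xc show "x \<in> nil_set ?D" unfolding nil_set_def by blast
qed

theorem theorem4p1:
  fixes A :: "('a, 'm) ring_scheme" and B :: "('b, 'n) ring_scheme"
  assumes "ring A" and "ring B"
    and "f \<in> ring_hom A B"
    and "ideal J B" and "J \<noteq> carrier B"
    and "J \<subseteq> nil_set B"
  shows "weak_armendariz (amalg A B f J) \<longleftrightarrow> weak_armendariz A"
proof
  have D: "ring (amalg A B f J)" by (rule ring_amalg[OF assms(1-4)])
  show "weak_armendariz A" if "weak_armendariz (amalg A B f J)"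
    using weak_armendariz_ring_hom_nil_kernel[OF assms(1) D amalg_diag_ring_hom[OF assms(2-4)]
        a_kernel_amalg_diag[OF assms(1)] that] .
  show "weak_armendariz (amalg A B f J)" if "weak_armendariz A"
    using weak_armendariz_ring_hom_nil_kernel[OF D assms(1) amalg_fst_ring_hom[OF assms(3,4)]
        a_kernel_amalg_fst[OF assms(1-4,6)] that] .
qed

end
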